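(* Let $L>0$ and $V\in C^0([0,L];\mathbb{R})$, and assume there is $\mathbf{x}_0\in(0,L)$ such that $V$ is strictly decreasing on $[0,\mathbf{x}_0]$ and strictly increasing on $[\mathbf{x}_0,L]$. Then the functions $x_\pm:[E_0,\infty)\to[0,L]$ are uniformly continuous, the function $\mathbb{R}\times[0,L]\to\mathbb{R}$, $(E,x)\mapsto d_{A,E}(x)$ is uniformly continuous, and there is $C>0$ such that for every $E\in\mathbb{R}$ the map $x\mapsto d_{A,E}(x)$ is $C$-Lipschitz.
   Context: $E_0=\min_{[0,L]}V=V(\mathbf{x}_0)$. For $E\ge E_0$: $x_-(E)$ is the solution of $V(x_-(E))=E$ with $x_-(E)\le\mathbf{x}_0$ if $E\le V(0)$, and $x_-(E)=0$ if $E\ge V(0)$; $x_+(E)$ is the solution of $V(x_+(E))=E$ with $x_+(E)\ge\mathbf{x}_0$ if $E\le V(L)$, and $x_+(E)=L$ if $E\ge V(L)$. For $E\ge E_0$, $K_E=\{V\le E\}$ and $d_{A,E}(x)=\inf_{y\in K_E}\left|\int_y^x\sqrt{(V(s)-E)_+}ds\right|$; for $E<E_0$, $d_{A,E}:=d_{A,E_0}$. *)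

theory Defs
  imports "HOL-Analysis.Analysis"
begin

definition E0 :: "(real \<Rightarrow> real) \<Rightarrow> real \<Rightarrow> real" where
  "E0 V L = Inf (V ` {0..L})"

definition x_minus :: "(real \<Rightarrow> real) \<Rightarrow> real \<Rightarrow> real \<Rightarrow> real" where
  "x_minus V x0 E = (if V 0 \<le> E then 0 else (THE x. 0 \<le> x \<and> x \<le> x0 \<and> V x = E))"

definition x_plus :: "(real \<Rightarrow> real) \<Rightarrow> real \<Rightarrow> real \<Rightarrow> real \<Rightarrow> real" where
  "x_plus V L x0 E = (if V L \<le> E then L else (THE x. x0 \<le> x \<and> x \<le> L \<and> V x = E))"

definition oint :: "(real \<Rightarrow> real) \<Rightarrow> real \<Rightarrow> real \<Rightarrow> real" where
  "oint f y x = (if y \<le> x then integral {y..x} f else - integral {x..y} f)"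

definition K_set :: "(real \<Rightarrow> real) \<Rightarrow> real \<Rightarrow> real \<Rightarrow> real set" where
  "K_set V L E = {x \<in> {0..L}. V x \<le> E}"

definition d_A :: "(real \<Rightarrow> real) \<Rightarrow> real \<Rightarrow> real \<Rightarrow> real \<Rightarrow> real" where
  "d_A V L E x = (let E' = max E (E0 V L) in
     Inf ((\<lambda>y. \<bar>oint (\<lambda>s. sqrt (max (V s - E') 0)) y x\<bar>) ` K_set V L E'))"

end

theory Submission
  imports Defs
begin

text \<open>
  For E \<ge> E0 the set K_E is the interval [x_-(E), x_+(E)], whose endpoints are obtained
  by inverting V on its two strictly monotone branches; the inverse of a continuous injective
  function on a compact interval is uniformly continuous, hence so are x_- and x_+.
  With A_E a primitive of sqrt ((V - max E E0)_+), the Agmon distance is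
  d_{A,E}(x) = inf {|A_E x - A_E y| : y \<in> K_E}. The integrand is bounded by
  sqrt (max V - E0), so d_{A,E} is Lipschitz in x uniformly in E. Since
  |sqrt a - sqrt b| \<le> sqrt |a - b|, changing E moves A_E by at most L sqrt |\<Delta>E|, and it
  moves the endpoints of K_E by the modulus of continuity of x_- and x_+; together this gives
  uniform continuity in (E, x).
\<close>

lemma integral_Icc_diff:
  fixes f :: "real \<Rightarrow> real"
  assumes "continuous_on {l..u} f" "l \<le> a" "a \<le> b" "b \<le> u"
  shows "integral {l..b} f - integral {l..a} f = integral {a..b} f"
proof -
  have "f integrable_on {l..b}"
    by (rule integrable_continuous_interval, rule continuous_on_subset[OF assms(1)]) (use assms in auto)
  then show ?thesis
    using Henstock_Kurzweil_Integration.integral_combine[of l a b f] assms by simp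
qed

lemma lipschitz_on_integral_Icc:
  fixes g :: "real \<Rightarrow> real"
  assumes g: "continuous_on {l..u} g" and K: "\<And>s. s \<in> {l..u} \<Longrightarrow> \<bar>g s\<bar> \<le> K" "0 \<le> K"
  shows "K-lipschitz_on {l..u} (\<lambda>x. integral {l..x} g)"
proof (rule lipschitz_on_leI)
  fix x y assume x: "x \<in> {l..u}" and y: "y \<in> {l..u}" and "x \<le> y"
  have "\<bar>integral {x..y} g\<bar> \<le> K * (y - x)"
    using integral_bound[of x y g K] continuous_on_subset[OF g] x y K \<open>x \<le> y\<close> by auto
  then show "dist (integral {l..x} g) (integral {l..y} g) \<le> K * dist x y"
    using integral_Icc_diff[OF g, of x y] x y \<open>x \<le> y\<close> by (simp add: dist_real_def abs_minus_commute)
qed (fact K)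

lemma oint_eq_integral_diff:
  fixes f :: "real \<Rightarrow> real"
  assumes "continuous_on {l..u} f" "a \<in> {l..u}" "b \<in> {l..u}"
  shows "oint f a b = integral {l..b} f - integral {l..a} f"
  using integral_Icc_diff[OF assms(1), of a b] integral_Icc_diff[OF assms(1), of b a] assms(2,3)
  by (cases "a \<le> b") (auto simp: oint_def)

lemma sqrt_abs_diff_le:
  assumes "0 \<le> a" "0 \<le> b"
  shows "\<bar>sqrt a - sqrt b\<bar> \<le> sqrt \<bar>a - b\<bar>"
proof -
  have *: "sqrt p - sqrt q \<le> sqrt \<bar>p - q\<bar>" if "0 \<le> q" "q \<le> p" for p q :: real
    using sqrt_add_le_add_sqrt[of q "p - q"] that by simp
  show ?thesis
    using *[of a b] *[of b a] assms by (cases "b \<le> a") (auto simp: abs_minus_commute abs_if)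
qed

lemma cINF_le_cINF_add:
  fixes g h :: "'a \<Rightarrow> real"
  assumes "T \<noteq> {}" "bdd_below (g ` S)"
    and "\<And>y. y \<in> T \<Longrightarrow> \<exists>y'\<in>S. g y' \<le> h y + e"
  shows "(INF y\<in>S. g y) \<le> (INF y\<in>T. h y) + e"
proof -
  have "(INF y\<in>S. g y) - e \<le> (INF y\<in>T. h y)"
  proof (rule cINF_greatest)
    fix y assume "y \<in> T"
    then obtain y' where "y' \<in> S" "g y' \<le> h y + e" using assms(3) by blast
    then show "(INF y\<in>S. g y) - e \<le> h y"
      using cINF_lower[OF assms(2)] by fastforce
  qed (fact assms(1))
  then show ?thesis by simp
qed

lemma uniformly_continuous_on_inj_cancel:
  fixes V :: "'a::metric_space \<Rightarrow> 'b::metric_space" and \<phi> :: "'c::metric_space \<Rightarrow> 'a"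
  assumes S: "compact S" "continuous_on S V" "inj_on V S"
    and \<phi>: "\<phi> ` A \<subseteq> S" "\<And>E. E \<in> A \<Longrightarrow> V (\<phi> E) = \<psi> E"
    and \<psi>: "uniformly_continuous_on A \<psi>"
  shows "uniformly_continuous_on A \<phi>"
proof -
  define g where "g = the_inv_into S V"
  have g: "g (V x) = x" if "x \<in> S" for x
    using S(3) that by (simp add: g_def the_inv_into_f_f)
  have ug: "uniformly_continuous_on (V ` S) g"
    using S g by (intro compact_uniformly_continuous continuous_on_inv compact_continuous_image) auto
  show ?thesis
    unfolding uniformly_continuous_on_sequentially
  proof (intro allI impI, elim conjE)
    fix x y assume x: "\<forall>n. x n \<in> A" and y: "\<forall>n. y n \<in> A"
      and "(\<lambda>n. dist (x n) (y n)) \<longlonglongrightarrow> 0"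
    then have "(\<lambda>n. dist (V (\<phi> (x n))) (V (\<phi> (y n)))) \<longlonglongrightarrow> 0"
      using \<psi> \<phi>(2) unfolding uniformly_continuous_on_sequentially by simp
    moreover have "\<forall>n. V (\<phi> (x n)) \<in> V ` S" "\<forall>n. V (\<phi> (y n)) \<in> V ` S"
      using x y \<phi>(1) by blast+
    ultimately have "(\<lambda>n. dist (g (V (\<phi> (x n)))) (g (V (\<phi> (y n))))) \<longlonglongrightarrow> 0"
      using ug[unfolded uniformly_continuous_on_sequentially, rule_format,
          of "\<lambda>n. V (\<phi> (x n))" "\<lambda>n. V (\<phi> (y n))"] by blast
    then show "(\<lambda>n. dist (\<phi> (x n)) (\<phi> (y n))) \<longlonglongrightarrow> 0"
      using x y \<phi>(1) g by (simp add: image_subset_iff)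
  qed
qed

locale single_well =
  fixes V :: "real \<Rightarrow> real" and L x0 :: real
  assumes V_cont: "continuous_on {0..L} V"
    and x0_pos: "0 < x0" and x0_less: "x0 < L"
    and V_decreasing: "\<And>a b. 0 \<le> a \<Longrightarrow> a < b \<Longrightarrow> b \<le> x0 \<Longrightarrow> V b < V a"
    and V_increasing: "\<And>a b. x0 \<le> a \<Longrightarrow> a < b \<Longrightarrow> b \<le> L \<Longrightarrow> V a < V b"
begin

lemma V_le_iff_left: "a \<in> {0..x0} \<Longrightarrow> x \<in> {0..x0} \<Longrightarrow> V x \<le> V a \<longleftrightarrow> a \<le> x"
  using V_decreasing[of x a] V_decreasing[of a x] by (cases x a rule: linorder_cases) auto

lemma V_le_iff_right: "b \<in> {x0..L} \<Longrightarrow> x \<in> {x0..L} \<Longrightarrow> V x \<le> V b \<longleftrightarrow> x \<le> b"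
  using V_increasing[of x b] V_increasing[of b x] by (cases x b rule: linorder_cases) auto

lemma inj_on_left: "inj_on V {0..x0}"
proof (rule inj_onI)
  fix x y assume "x \<in> {0..x0}" "y \<in> {0..x0}" "V x = V y"
  then show "x = y" using V_le_iff_left[of x y] V_le_iff_left[of y x] by auto
qed

lemma inj_on_right: "inj_on V {x0..L}"
proof (rule inj_onI)
  fix x y assume "x \<in> {x0..L}" "y \<in> {x0..L}" "V x = V y"
  then show "x = y" using V_le_iff_right[of x y] V_le_iff_right[of y x] by auto
qed

lemma continuous_on_left: "continuous_on {0..x0} V"
  using continuous_on_subset[OF V_cont] x0_less by auto

lemma continuous_on_right: "continuous_on {x0..L} V"
  using continuous_on_subset[OF V_cont] x0_pos by auto

lemma V_x0_le: "x \<in> {0..L} \<Longrightarrow> V x0 \<le> V x"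
  using V_le_iff_left[of x x0] V_le_iff_right[of x x0] x0_pos x0_less by (cases "x \<le> x0") auto

lemma E0_eq: "E0 V L = V x0"
  unfolding E0_def by (rule cInf_eq_minimum) (use V_x0_le x0_pos x0_less in auto)

lemma x_minus_solves:
  assumes "V x0 \<le> E"
  shows "x_minus V x0 E \<in> {0..x0}" and "V (x_minus V x0 E) = min E (V 0)"
proof -
  have "x_minus V x0 E \<in> {0..x0} \<and> V (x_minus V x0 E) = min E (V 0)"
  proof (cases "V 0 \<le> E")
    case True
    then show ?thesis using x0_pos by (simp add: x_minus_def)
  next
    case False
    then obtain x where x: "x \<in> {0..x0}" "V x = E"
      using IVT2'[OF _ _ _ continuous_on_left] assms x0_pos by fastforce
    have "(THE x. 0 \<le> x \<and> x \<le> x0 \<and> V x = E) = x"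
      using x inj_onD[OF inj_on_left] by (intro the_equality) auto
    then show ?thesis using x False by (simp add: x_minus_def)
  qed
  then show "x_minus V x0 E \<in> {0..x0}" and "V (x_minus V x0 E) = min E (V 0)" by auto
qed

lemma x_plus_solves:
  assumes "V x0 \<le> E"
  shows "x_plus V L x0 E \<in> {x0..L}" and "V (x_plus V L x0 E) = min E (V L)"
proof -
  have "x_plus V L x0 E \<in> {x0..L} \<and> V (x_plus V L x0 E) = min E (V L)"
  proof (cases "V L \<le> E")
    case True
    then show ?thesis using x0_less by (simp add: x_plus_def)
  next
    case False
    then obtain x where x: "x \<in> {x0..L}" "V x = E"
      using IVT'[OF _ _ _ continuous_on_right] assms x0_less by fastforce
    have "(THE x. x0 \<le> x \<and> x \<le> L \<and> V x = E) = x"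
      using x inj_onD[OF inj_on_right] by (intro the_equality) auto
    then show ?thesis using x False by (simp add: x_plus_def)
  qed
  then show "x_plus V L x0 E \<in> {x0..L}" and "V (x_plus V L x0 E) = min E (V L)" by auto
qed

lemma K_set_eq:
  assumes "V x0 \<le> E"
  shows "K_set V L E = {x_minus V x0 E .. x_plus V L x0 E}"
proof -
  note a = x_minus_solves[OF assms] and b = x_plus_solves[OF assms]
  have left: "V x \<le> E \<longleftrightarrow> x_minus V x0 E \<le> x" if "x \<in> {0..x0}" for x
    using V_le_iff_left[OF a(1) that] V_le_iff_left[of 0 x] that x0_pos a(2) by auto
  have right: "V x \<le> E \<longleftrightarrow> x \<le> x_plus V L x0 E" if "x \<in> {x0..L}" for x
    using V_le_iff_right[OF b(1) that] V_le_iff_right[of L x] that x0_less b(2) by auto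
  show ?thesis
  proof (intro set_eqI)
    fix x
    show "x \<in> K_set V L E \<longleftrightarrow> x \<in> {x_minus V x0 E .. x_plus V L x0 E}"
      using left[of x] right[of x] a(1) b(1) unfolding K_set_def by (cases "x \<le> x0") auto
  qed
qed

lemma uniformly_continuous_x_minus: "uniformly_continuous_on {V x0..} (x_minus V x0)"
proof (rule uniformly_continuous_on_inj_cancel[OF compact_Icc continuous_on_left inj_on_left])
  show "uniformly_continuous_on {V x0..} (\<lambda>E. min E (V 0))"
    by (rule lipschitz_on_uniformly_continuous[of 1]) (auto intro!: lipschitz_onI simp: dist_real_def)
qed (use x_minus_solves in auto)

lemma uniformly_continuous_x_plus: "uniformly_continuous_on {V x0..} (x_plus V L x0)"
proof (rule uniformly_continuous_on_inj_cancel[OF compact_Icc continuous_on_right inj_on_right])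
  show "uniformly_continuous_on {V x0..} (\<lambda>E. min E (V L))"
    by (rule lipschitz_on_uniformly_continuous[of 1]) (auto intro!: lipschitz_onI simp: dist_real_def)
qed (use x_plus_solves in auto)

text \<open>Turning points at the clamped energy max E E0, the energy that d_A actually uses.\<close>

definition "left_turn E = x_minus V x0 (max E (V x0))"
definition "right_turn E = x_plus V L x0 (max E (V x0))"

lemma left_turn_mem: "left_turn E \<in> {0..x0}"
  unfolding left_turn_def by (rule x_minus_solves) simp

lemma right_turn_mem: "right_turn E \<in> {x0..L}"
  unfolding right_turn_def by (rule x_plus_solves) simp

lemma uniformly_continuous_left_turn: "uniformly_continuous_on UNIV left_turn"
proof (rule uniformly_continuous_on_inj_cancel[OF compact_Icc continuous_on_left inj_on_left])
  show "uniformly_continuous_on UNIV (\<lambda>E. min (max E (V x0)) (V 0))"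
    by (rule lipschitz_on_uniformly_continuous[of 1]) (auto intro!: lipschitz_onI simp: dist_real_def)
qed (use left_turn_mem x_minus_solves in \<open>auto simp: left_turn_def\<close>)

lemma uniformly_continuous_right_turn: "uniformly_continuous_on UNIV right_turn"
proof (rule uniformly_continuous_on_inj_cancel[OF compact_Icc continuous_on_right inj_on_right])
  show "uniformly_continuous_on UNIV (\<lambda>E. min (max E (V x0)) (V L))"
    by (rule lipschitz_on_uniformly_continuous[of 1]) (auto intro!: lipschitz_onI simp: dist_real_def)
qed (use right_turn_mem x_plus_solves in \<open>auto simp: right_turn_def\<close>)

definition "weight E s = sqrt (max (V s - max E (V x0)) 0)"
definition "action E x = integral {0..x} (weight E)"
definition "weight_bound = sqrt (Sup (V ` {0..L}) - V x0)"

lemma continuous_on_weight: "continuous_on {0..L} (weight E)"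
  unfolding weight_def by (intro continuous_intros V_cont)

lemma weight_le_bound:
  assumes s: "s \<in> {0..L}"
  shows "\<bar>weight E s\<bar> \<le> weight_bound"
proof -
  have "bdd_above (V ` {0..L})"
    by (intro bounded_imp_bdd_above compact_imp_bounded compact_continuous_image V_cont compact_Icc)
  then have "V s \<le> Sup (V ` {0..L})"
    using s by (intro cSup_upper) auto
  then show ?thesis
    using V_x0_le[OF s] by (simp add: weight_def weight_bound_def)
qed

lemma weight_bound_nonneg: "0 \<le> weight_bound"
  by (rule order_trans[OF abs_ge_zero weight_le_bound[of 0 0]]) (use x0_pos x0_less in auto)

lemma weight_diff_le: "\<bar>weight E1 s - weight E2 s\<bar> \<le> sqrt \<bar>E1 - E2\<bar>"
proof -
  have "\<bar>weight E1 s - weight E2 s\<bar>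
      \<le> sqrt \<bar>max (V s - max E1 (V x0)) 0 - max (V s - max E2 (V x0)) 0\<bar>"
    unfolding weight_def by (rule sqrt_abs_diff_le) simp_all
  also have "\<dots> \<le> sqrt \<bar>E1 - E2\<bar>"
    by (simp add: max_def abs_if)
  finally show ?thesis .
qed

lemma lipschitz_action: "weight_bound-lipschitz_on {0..L} (action E)"
  unfolding action_def
  by (rule lipschitz_on_integral_Icc[OF continuous_on_weight weight_le_bound weight_bound_nonneg])

lemma action_diff_le:
  assumes "x \<in> {0..L}" "y \<in> {0..L}"
  shows "\<bar>(action E1 x - action E2 x) - (action E1 y - action E2 y)\<bar> \<le> L * sqrt \<bar>E1 - E2\<bar>"
proof -
  have diff: "action E1 z - action E2 z = integral {0..z} (\<lambda>s. weight E1 s - weight E2 s)"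
    if "z \<in> {0..L}" for z
    unfolding action_def using that
    by (intro integral_diff[symmetric] integrable_continuous_interval continuous_on_subset[OF continuous_on_weight]) auto
  have "(sqrt \<bar>E1 - E2\<bar>)-lipschitz_on {0..L} (\<lambda>z. integral {0..z} (\<lambda>s. weight E1 s - weight E2 s))"
    by (intro lipschitz_on_integral_Icc continuous_intros continuous_on_weight weight_diff_le) simp
  from lipschitz_onD[OF this assms]
  have "\<bar>(action E1 x - action E2 x) - (action E1 y - action E2 y)\<bar> \<le> sqrt \<bar>E1 - E2\<bar> * \<bar>x - y\<bar>"
    unfolding diff[OF assms(1)] diff[OF assms(2)] by (simp add: dist_real_def)
  also have "\<dots> \<le> sqrt \<bar>E1 - E2\<bar> * L"
    using assms by (intro mult_left_mono) auto
  finally show ?thesis by (simp add: mult.commute)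
qed

lemma d_A_eq_INF:
  assumes "x \<in> {0..L}"
  shows "d_A V L E x = (INF y\<in>{left_turn E..right_turn E}. \<bar>action E x - action E y\<bar>)"
proof -
  have "K_set V L (max E (V x0)) = {left_turn E..right_turn E}"
    unfolding left_turn_def right_turn_def by (simp add: K_set_eq)
  moreover have "oint (weight E) y x = action E x - action E y" if "y \<in> {left_turn E..right_turn E}" for y
    unfolding action_def using assms that left_turn_mem[of E] right_turn_mem[of E]
    by (intro oint_eq_integral_diff[OF continuous_on_weight]) auto
  ultimately show ?thesis
    unfolding d_A_def Let_def E0_eq weight_def[symmetric] by simp
qed

lemma d_A_lipschitz: "weight_bound-lipschitz_on {0..L} (d_A V L E)"
proof (rule lipschitz_onI)
  have one_sided: "d_A V L E x \<le> d_A V L E x' + weight_bound * \<bar>x - x'\<bar>"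
    if x: "x \<in> {0..L}" and x': "x' \<in> {0..L}" for x x'
    unfolding d_A_eq_INF[OF x] d_A_eq_INF[OF x']
  proof (rule cINF_le_cINF_add)
    show "{left_turn E..right_turn E} \<noteq> {}"
      using left_turn_mem[of E] right_turn_mem[of E] by auto
    show "bdd_below ((\<lambda>y. \<bar>action E x - action E y\<bar>) ` {left_turn E..right_turn E})"
      by (rule bdd_belowI2[of _ 0]) simp
    fix y
    have "\<bar>action E x - action E x'\<bar> \<le> weight_bound * \<bar>x - x'\<bar>"
      using lipschitz_onD[OF lipschitz_action x x'] by (simp add: dist_real_def)
    then show "\<exists>y'\<in>{left_turn E..right_turn E}.
        \<bar>action E x - action E y'\<bar> \<le> \<bar>action E x' - action E y\<bar> + weight_bound * \<bar>x - x'\<bar>"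
      if "y \<in> {left_turn E..right_turn E}"
      using that by (intro bexI[of _ y]) auto
  qed
  fix x y assume "x \<in> {0..L}" "y \<in> {0..L}"
  then show "dist (d_A V L E x) (d_A V L E y) \<le> weight_bound * dist x y"
    using one_sided[of x y] one_sided[of y x] by (simp add: dist_real_def abs_minus_commute)
qed (fact weight_bound_nonneg)

definition "energy_modulus E1 E2 = L * sqrt \<bar>E1 - E2\<bar>
  + weight_bound * (\<bar>left_turn E1 - left_turn E2\<bar> + \<bar>right_turn E1 - right_turn E2\<bar>)"

lemma d_A_energy_le:
  assumes x: "x \<in> {0..L}"
  shows "d_A V L E1 x \<le> d_A V L E2 x + energy_modulus E1 E2"
  unfolding d_A_eq_INF[OF x]
proof (rule cINF_le_cINF_add)
  show "{left_turn E2..right_turn E2} \<noteq> {}"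
    using left_turn_mem[of E2] right_turn_mem[of E2] by auto
  show "bdd_below ((\<lambda>y. \<bar>action E1 x - action E1 y\<bar>) ` {left_turn E1..right_turn E1})"
    by (rule bdd_belowI2[of _ 0]) simp
  fix y assume y: "y \<in> {left_turn E2..right_turn E2}"
  \<comment> \<open>the projection of y onto the allowed region at energy E1\<close>
  define y' where "y' = max (left_turn E1) (min (right_turn E1) y)"
  have y': "y' \<in> {left_turn E1..right_turn E1}"
    using left_turn_mem[of E1] right_turn_mem[of E1] by (auto simp: y'_def)
  have "y \<in> {0..L}" "y' \<in> {0..L}"
    using y y' left_turn_mem[of E1] right_turn_mem[of E1] left_turn_mem[of E2] right_turn_mem[of E2]
    by auto
  then have "\<bar>action E1 y - action E1 y'\<bar> \<le> weight_bound * \<bar>y - y'\<bar>"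
    using lipschitz_onD[OF lipschitz_action] by (simp add: dist_real_def)
  also have "\<dots> \<le> weight_bound * (\<bar>left_turn E1 - left_turn E2\<bar> + \<bar>right_turn E1 - right_turn E2\<bar>)"
    using y weight_bound_nonneg unfolding y'_def by (intro mult_left_mono) auto
  finally have "\<bar>action E1 x - action E1 y'\<bar> \<le> \<bar>action E2 x - action E2 y\<bar> + energy_modulus E1 E2"
    using action_diff_le[OF x \<open>y \<in> {0..L}\<close>, of E1 E2] unfolding energy_modulus_def by linarith
  then show "\<exists>y'\<in>{left_turn E1..right_turn E1}.
      \<bar>action E1 x - action E1 y'\<bar> \<le> \<bar>action E2 x - action E2 y\<bar> + energy_modulus E1 E2"
    using y' by blast
qed

lemma d_A_energy_diff:
  assumes "x \<in> {0..L}"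
  shows "\<bar>d_A V L E1 x - d_A V L E2 x\<bar> \<le> energy_modulus E1 E2"
proof -
  have "energy_modulus E2 E1 = energy_modulus E1 E2"
    by (simp add: energy_modulus_def abs_minus_commute)
  then show ?thesis
    using d_A_energy_le[OF assms, of E1 E2] d_A_energy_le[OF assms, of E2 E1]
    unfolding abs_le_iff by linarith
qed

lemma energy_modulus_tendsto_0:
  assumes "(\<lambda>n. dist (E n) (E' n)) \<longlonglongrightarrow> 0"
  shows "(\<lambda>n. energy_modulus (E n) (E' n)) \<longlonglongrightarrow> 0"
proof -
  have "(\<lambda>n. dist (left_turn (E n)) (left_turn (E' n))) \<longlonglongrightarrow> 0"
    "(\<lambda>n. dist (right_turn (E n)) (right_turn (E' n))) \<longlonglongrightarrow> 0"
    using assms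
      uniformly_continuous_left_turn[unfolded uniformly_continuous_on_sequentially, rule_format, of E E']
      uniformly_continuous_right_turn[unfolded uniformly_continuous_on_sequentially, rule_format, of E E']
    by simp_all
  moreover have "(\<lambda>n. sqrt \<bar>E n - E' n\<bar>) \<longlonglongrightarrow> sqrt 0"
    using assms by (intro tendsto_real_sqrt) (simp add: dist_real_def)
  ultimately show ?thesis
    unfolding energy_modulus_def dist_real_def
    by (auto intro!: tendsto_add_zero tendsto_mult_right_zero)
qed

lemma uniformly_continuous_d_A: "uniformly_continuous_on (UNIV \<times> {0..L}) (\<lambda>(E, x). d_A V L E x)"
  unfolding uniformly_continuous_on_sequentially case_prod_beta
proof (intro allI impI, elim conjE)
  fix p q :: "nat \<Rightarrow> real \<times> real"
  assume p: "\<forall>n. p n \<in> UNIV \<times> {0..L}" and q: "\<forall>n. q n \<in> UNIV \<times> {0..L}"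
    and pq: "(\<lambda>n. dist (p n) (q n)) \<longlonglongrightarrow> 0"
  define bound where "bound n = weight_bound * dist (snd (p n)) (snd (q n))
    + energy_modulus (fst (p n)) (fst (q n))" for n
  have le_bound: "dist (d_A V L (fst (p n)) (snd (p n))) (d_A V L (fst (q n)) (snd (q n))) \<le> bound n"
    for n
  proof -
    have x: "snd (p n) \<in> {0..L}" "snd (q n) \<in> {0..L}"
      using p q by (simp_all add: mem_Times_iff)
    have "dist (d_A V L (fst (p n)) (snd (p n))) (d_A V L (fst (q n)) (snd (q n)))
        \<le> dist (d_A V L (fst (p n)) (snd (p n))) (d_A V L (fst (p n)) (snd (q n)))
          + dist (d_A V L (fst (p n)) (snd (q n))) (d_A V L (fst (q n)) (snd (q n)))"
      by (rule dist_triangle)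
    also have "\<dots> \<le> bound n"
      unfolding bound_def using lipschitz_onD[OF d_A_lipschitz x] d_A_energy_diff[OF x(2)]
      by (intro add_mono) (simp_all add: dist_real_def)
    finally show ?thesis .
  qed
  have "(\<lambda>n. dist (fst (p n)) (fst (q n))) \<longlonglongrightarrow> 0"
    by (rule Lim_null_comparison[OF _ pq]) (simp add: dist_fst_le)
  moreover have "(\<lambda>n. dist (snd (p n)) (snd (q n))) \<longlonglongrightarrow> 0"
    by (rule Lim_null_comparison[OF _ pq]) (simp add: dist_snd_le)
  ultimately have "bound \<longlonglongrightarrow> 0"
    unfolding bound_def by (intro tendsto_add_zero tendsto_mult_right_zero energy_modulus_tendsto_0)
  then show "(\<lambda>n. dist (d_A V L (fst (p n)) (snd (p n))) (d_A V L (fst (q n)) (snd (q n)))) \<longlonglongrightarrow> 0"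
    by (rule Lim_null_comparison[OF always_eventually, rotated]) (simp add: le_bound)
qed

end

theorem lemma2p1:
  fixes V :: "real \<Rightarrow> real" and L x0 :: real
  assumes "L > 0"
    and "continuous_on {0..L} V"
    and "0 < x0" and "x0 < L"
    and "\<And>a b. 0 \<le> a \<Longrightarrow> a < b \<Longrightarrow> b \<le> x0 \<Longrightarrow> V b < V a"
    and "\<And>a b. x0 \<le> a \<Longrightarrow> a < b \<Longrightarrow> b \<le> L \<Longrightarrow> V a < V b"
  shows "x_minus V x0 ` {E0 V L..} \<subseteq> {0..L} \<and>
         x_plus V L x0 ` {E0 V L..} \<subseteq> {0..L} \<and>
         uniformly_continuous_on {E0 V L..} (x_minus V x0) \<and>
         uniformly_continuous_on {E0 V L..} (x_plus V L x0) \<and>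
         uniformly_continuous_on (UNIV \<times> {0..L}) (\<lambda>(E, x). d_A V L E x) \<and>
         (\<exists>C>0. \<forall>E. C-lipschitz_on {0..L} (d_A V L E))"
proof -
  \<comment> \<open>0 < L is implied by 0 < x0 < L\<close>
  interpret single_well V L x0
    using assms(2-6) by unfold_locales auto
  have "x_minus V x0 ` {E0 V L..} \<subseteq> {0..L}" "x_plus V L x0 ` {E0 V L..} \<subseteq> {0..L}"
    using x_minus_solves(1) x_plus_solves(1) x0_pos x0_less by (force simp: E0_eq)+
  moreover have "(weight_bound + 1)-lipschitz_on {0..L} (d_A V L E)" for E
    using d_A_lipschitz by (rule lipschitz_on_le) simp
  ultimately show ?thesis
    using uniformly_continuous_x_minus uniformly_continuous_x_plus uniformly_continuous_d_A
      weight_bound_nonneg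
    by (auto simp: E0_eq intro!: exI[of _ "weight_bound + 1"])
qed

end
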